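(* Let $1\le k\le N$ and let $\varphi(z)=\frac{Az+B}{\langle z,C\rangle+d}$ be a linear fractional self-map of $B_N$, with adjoint map $\sigma(z)=\frac{A^*z-C}{\langle z,-B\rangle+\overline{d}}$. If $\varphi$ maps $B_k=\{(z_1,\dots,z_N)\in B_N: z_i=0\text{ for } i>k\}$ into itself and the restriction of $\varphi$ to $B_k$ is an automorphism of $B_k$, then the first $k$ coordinate functions of $\varphi$ and of $\sigma$ depend only on the variables $z_1,\dots,z_k$.
   Context: $B_N$ is the open unit ball of $\mathbb{C}^N$, $\langle z,w\rangle=\sum_j z_j\overline{w_j}$, $A$ is an $N\times N$ complex matrix with conjugate transpose $A^*$, $B,C\in\mathbb{C}^N$, $d\in\mathbb{C}$. $B_k$ is identified with the unit ball of $\mathbb{C}^k$. *)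

theory Defs
  imports "HOL-Analysis.Analysis"
begin

text \<open>Points of C^N are represented as functions nat => complex whose coordinates
  with index >= N vanish; coordinate z_j of the paper is z (j-1) here.\<close>

definition cinner :: "nat \<Rightarrow> (nat \<Rightarrow> complex) \<Rightarrow> (nat \<Rightarrow> complex) \<Rightarrow> complex" where
  "cinner N z w = (\<Sum>j<N. z j * cnj (w j))"

definition cball_N :: "nat \<Rightarrow> (nat \<Rightarrow> complex) set" where
  "cball_N N = {z. (\<forall>i\<ge>N. z i = 0) \<and> (\<Sum>j<N. (cmod (z j))\<^sup>2) < 1}"

definition lf_map :: "nat \<Rightarrow> (nat \<Rightarrow> nat \<Rightarrow> complex) \<Rightarrow> (nat \<Rightarrow> complex) \<Rightarrow> (nat \<Rightarrow> complex)
    \<Rightarrow> complex \<Rightarrow> (nat \<Rightarrow> complex) \<Rightarrow> (nat \<Rightarrow> complex)" where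
  "lf_map N A B C d z = (\<lambda>i. if i < N then ((\<Sum>j<N. A i j * z j) + B i) / (cinner N z C + d) else 0)"

definition adj_mat :: "(nat \<Rightarrow> nat \<Rightarrow> complex) \<Rightarrow> (nat \<Rightarrow> nat \<Rightarrow> complex)" where
  "adj_mat A = (\<lambda>i j. cnj (A j i))"

text \<open>Holomorphy of a map defined on an open subset S of C^k (embedded as above):
  every coordinate function is continuous and holomorphic in each variable separately.\<close>
definition holo_k :: "nat \<Rightarrow> (nat \<Rightarrow> complex) set \<Rightarrow> ((nat \<Rightarrow> complex) \<Rightarrow> (nat \<Rightarrow> complex)) \<Rightarrow> bool" where
  "holo_k k S F \<longleftrightarrow>
     (\<forall>i<k. continuous_on S (\<lambda>z. F z i)) \<and>
     (\<forall>z\<in>S. \<forall>i<k. \<forall>j<k. (\<lambda>t. F (z(j := t)) i) field_differentiable (at (z j)))"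

definition is_aut_ball :: "nat \<Rightarrow> ((nat \<Rightarrow> complex) \<Rightarrow> (nat \<Rightarrow> complex)) \<Rightarrow> bool" where
  "is_aut_ball k F \<longleftrightarrow>
     F ` cball_N k \<subseteq> cball_N k \<and> holo_k k (cball_N k) F \<and>
     (\<exists>G. G ` cball_N k \<subseteq> cball_N k \<and> holo_k k (cball_N k) G \<and>
          (\<forall>z\<in>cball_N k. G (F z) = z \<and> F (G z) = z))"

end

theory Submission
  imports Defs
begin

text \<open>Invariance of \<open>B_k\<close> alone forces \<open>B_i = 0\<close> and \<open>A_im = 0\<close> for \<open>m < k \<le> i\<close>, which is the
  statement for \<open>\<sigma>\<close>. For \<open>\<phi>\<close> consider \<open>Q(z) = |\<langle>z,C\<rangle> + d|\<^sup>2 - |Az + B|\<^sup>2\<close>, which is positive on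
  \<open>B_N\<close> because \<open>\<phi>\<close> is a self-map. A unit vector \<open>e\<close> of \<open>\<complex>\<^sup>k\<close> cannot be mapped into \<open>B_k\<close>, since the
  continuous inverse of \<open>\<phi>|B_k\<close> would pull \<open>\<phi>(e)\<close> back to \<open>e\<close>; hence \<open>Q(e) = 0\<close>. As \<open>Q > 0\<close> on
  \<open>B_N\<close>, the first-order variation of \<open>Q\<close> at \<open>e\<close> in each transversal direction \<open>z_j\<close>, \<open>j \<ge> k\<close>,
  must vanish. That variation is affine in \<open>z\<close>, so it vanishes on all of \<open>B_k\<close>; evaluated at
  preimages under \<open>\<phi>\<close> it yields \<open>C_j = 0\<close> and \<open>A_ij = 0\<close> for \<open>i < k \<le> j\<close>.\<close>

definition sphere_N :: "nat \<Rightarrow> (nat \<Rightarrow> complex) set" where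
  "sphere_N N = {z. (\<forall>i\<ge>N. z i = 0) \<and> (\<Sum>j<N. (cmod (z j))\<^sup>2) = 1}"

lemma cmod_add_power2: "(cmod (x + y))\<^sup>2 = (cmod x)\<^sup>2 + 2 * Re (cnj x * y) + (cmod y)\<^sup>2"
  unfolding cmod_power2 by (simp add: power2_eq_square algebra_simps)

lemma sum_cball_N_eq:
  fixes f :: "nat \<Rightarrow> 'a::comm_monoid_add"
  assumes "z \<in> cball_N k" "k \<le> N" "\<And>m. z m = 0 \<Longrightarrow> f m = 0"
  shows "(\<Sum>m<N. f m) = (\<Sum>m<k. f m)"
  using assms by (intro sum.mono_neutral_right) (auto simp: cball_N_def)

lemma cball_N_mono:
  assumes "k \<le> N"
  shows "cball_N k \<subseteq> cball_N N"
proof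
  fix z assume z: "z \<in> cball_N k"
  hence "(\<Sum>m<N. (cmod (z m))\<^sup>2) = (\<Sum>m<k. (cmod (z m))\<^sup>2)"
    using assms by (intro sum_cball_N_eq) auto
  with z assms show "z \<in> cball_N N"
    by (auto simp: cball_N_def)
qed

lemma zero_in_cball_N: "(\<lambda>_. 0) \<in> cball_N N"
  by (simp add: cball_N_def)

lemma cmod_single_power2: "(cmod (if m = i then c else 0))\<^sup>2 = (if m = i then (cmod c)\<^sup>2 else 0)"
  by simp

lemma single_in_cball_N:
  assumes "i < N" "cmod c < 1"
  shows "(\<lambda>m. if m = i then c else 0) \<in> cball_N N"
proof -
  have "(\<Sum>m<N. (cmod (if m = i then c else 0))\<^sup>2) = (cmod c)\<^sup>2"
    using assms(1) by (simp add: cmod_single_power2)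
  moreover have "(cmod c)\<^sup>2 < 1"
    using assms(2) by (simp add: abs_square_less_1)
  ultimately show ?thesis
    using assms(1) by (simp add: cball_N_def)
qed

lemma sum_single_mult:
  fixes f :: "nat \<Rightarrow> 'a::semiring_0"
  assumes "m < N"
  shows "(\<Sum>i<N. (if i = m then c else 0) * f i) = c * f m"
    and "(\<Sum>i<N. f i * (if i = m then c else 0)) = f m * c"
proof -
  have "(if i = m then c else 0) * f i = (if i = m then c * f m else 0)"
    and "f i * (if i = m then c else 0) = (if i = m then f m * c else 0)" for i
    by simp_all
  with assms show "(\<Sum>i<N. (if i = m then c else 0) * f i) = c * f m"
    and "(\<Sum>i<N. f i * (if i = m then c else 0)) = f m * c"
    by simp_all
qed

lemma single_in_sphere_N:
  assumes "i < N" "cmod c = 1"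
  shows "(\<lambda>m. if m = i then c else 0) \<in> sphere_N N"
  using assms by (simp add: sphere_N_def cmod_single_power2)

lemma sum_cmod_scaled_sphere:
  assumes "e \<in> sphere_N N"
  shows "(\<Sum>m<N. (cmod (of_real s * e m))\<^sup>2) = s\<^sup>2"
  using assms by (simp add: sphere_N_def norm_mult power_mult_distrib sum_distrib_left[symmetric])

lemma scaled_sphere_in_cball_N:
  assumes "e \<in> sphere_N N" "\<bar>s\<bar> < 1"
  shows "(\<lambda>m. of_real s * e m) \<in> cball_N N"
  using assms by (simp add: cball_N_def sphere_N_def sum_cmod_scaled_sphere abs_square_less_1)

lemma in_cball_N_iff:
  assumes "\<forall>i\<ge>k. z i = 0" "k \<le> N"
  shows "z \<in> cball_N k \<longleftrightarrow> (\<Sum>i<N. (cmod (z i))\<^sup>2) < 1"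
proof -
  have "(\<Sum>i<N. (cmod (z i))\<^sup>2) = (\<Sum>i<k. (cmod (z i))\<^sup>2)"
    using assms by (intro sum.mono_neutral_right) auto
  with assms(1) show ?thesis
    by (simp add: cball_N_def)
qed

lemma update_in_cball_N:
  assumes "z \<in> cball_N k" "k \<le> j" "j < N" "(\<Sum>m<k. (cmod (z m))\<^sup>2) + (cmod t)\<^sup>2 < 1"
  shows "z(j := t) \<in> cball_N N"
proof -
  have "(\<Sum>m<N. (cmod ((z(j := t)) m))\<^sup>2) = (\<Sum>m<N. (cmod (z m))\<^sup>2 + (if m = j then (cmod t)\<^sup>2 else 0))"
    using assms(1,2) by (intro sum.cong) (auto simp: cball_N_def)
  also have "\<dots> = (\<Sum>m<k. (cmod (z m))\<^sup>2) + (cmod t)\<^sup>2"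
    using assms(1-3) sum_cball_N_eq[OF assms(1), of N "\<lambda>m. (cmod (z m))\<^sup>2"] by (simp add: sum.distrib)
  finally show ?thesis
    using assms by (auto simp: cball_N_def)
qed

text \<open>\<open>lf_quad z = |\<langle>z,C\<rangle> + d|\<^sup>2 (1 - |\<phi>(z)|\<^sup>2)\<close> whenever the denominator does not vanish.\<close>

definition lf_quad :: "nat \<Rightarrow> (nat \<Rightarrow> nat \<Rightarrow> complex) \<Rightarrow> (nat \<Rightarrow> complex) \<Rightarrow> (nat \<Rightarrow> complex)
    \<Rightarrow> complex \<Rightarrow> (nat \<Rightarrow> complex) \<Rightarrow> real" where
  "lf_quad N A B C d z =
     (cmod (cinner N z C + d))\<^sup>2 - (\<Sum>i<N. (cmod ((\<Sum>m<N. A i m * z m) + B i))\<^sup>2)"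

definition lf_grad :: "nat \<Rightarrow> (nat \<Rightarrow> nat \<Rightarrow> complex) \<Rightarrow> (nat \<Rightarrow> complex) \<Rightarrow> (nat \<Rightarrow> complex)
    \<Rightarrow> complex \<Rightarrow> nat \<Rightarrow> (nat \<Rightarrow> complex) \<Rightarrow> complex" where
  "lf_grad N A B C d j z =
     (cinner N z C + d) * C j - (\<Sum>i<N. ((\<Sum>m<N. A i m * z m) + B i) * cnj (A i j))"

lemma lf_quad_pos_iff:
  "0 < lf_quad N A B C d z \<longleftrightarrow>
     cinner N z C + d \<noteq> 0 \<and> (\<Sum>i<N. (cmod (lf_map N A B C d z i))\<^sup>2) < 1"
proof (cases "cinner N z C + d = 0")
  case True
  moreover have "0 \<le> (\<Sum>i<N. (cmod ((\<Sum>m<N. A i m * z m) + B i))\<^sup>2)"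
    by (intro sum_nonneg) simp
  ultimately show ?thesis
    by (simp add: lf_quad_def)
next
  case False
  have "(\<Sum>i<N. (cmod (lf_map N A B C d z i))\<^sup>2)
      = (\<Sum>i<N. (cmod ((\<Sum>m<N. A i m * z m) + B i))\<^sup>2) / (cmod (cinner N z C + d))\<^sup>2"
    by (simp add: lf_map_def norm_divide power_divide sum_divide_distrib)
  with False show ?thesis
    by (simp add: lf_quad_def divide_less_eq)
qed

lemma sum_mult_fun_upd_add:
  fixes g z :: "nat \<Rightarrow> 'a::comm_ring"
  assumes "j < N"
  shows "(\<Sum>m<N. g m * (z(j := z j + t)) m) = (\<Sum>m<N. g m * z m) + g j * t"
    and "(\<Sum>m<N. (z(j := z j + t)) m * g m) = (\<Sum>m<N. z m * g m) + t * g j"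
proof -
  have "(\<Sum>m<N. g m * (z(j := z j + t)) m) = (\<Sum>m<N. g m * z m + (if m = j then g j * t else 0))"
    by (intro sum.cong) (auto simp: distrib_left)
  thus "(\<Sum>m<N. g m * (z(j := z j + t)) m) = (\<Sum>m<N. g m * z m) + g j * t"
    using assms by (simp add: sum.distrib)
  thus "(\<Sum>m<N. (z(j := z j + t)) m * g m) = (\<Sum>m<N. z m * g m) + t * g j"
    by (simp add: mult.commute)
qed

lemma lf_quad_update:
  assumes "j < N"
  shows "lf_quad N A B C d (z(j := z j + t)) = lf_quad N A B C d z + 2 * Re (t * cnj (lf_grad N A B C d j z))
           + (cmod t)\<^sup>2 * ((cmod (C j))\<^sup>2 - (\<Sum>i<N. (cmod (A i j))\<^sup>2))"
proof -
  define D where "D = cinner N z C + d"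
  define \<alpha> where "\<alpha> i = (\<Sum>m<N. A i m * z m) + B i" for i
  have "cinner N (z(j := z j + t)) C + d = D + t * cnj (C j)"
    using sum_mult_fun_upd_add(2)[OF assms, of z t "\<lambda>m. cnj (C m)"] by (simp add: cinner_def D_def)
  hence den: "(cmod (cinner N (z(j := z j + t)) C + d))\<^sup>2
      = (cmod D)\<^sup>2 + 2 * Re (t * (cnj D * cnj (C j))) + (cmod t)\<^sup>2 * (cmod (C j))\<^sup>2"
    by (simp add: cmod_add_power2 norm_mult power_mult_distrib mult.left_commute)
  have "(\<Sum>m<N. A i m * (z(j := z j + t)) m) + B i = \<alpha> i + A i j * t" for i
    using sum_mult_fun_upd_add(1)[OF assms, of "A i" z t] by (simp add: \<alpha>_def)
  hence num: "(cmod ((\<Sum>m<N. A i m * (z(j := z j + t)) m) + B i))\<^sup>2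
      = (cmod (\<alpha> i))\<^sup>2 + 2 * Re (t * (cnj (\<alpha> i) * A i j)) + (cmod t)\<^sup>2 * (cmod (A i j))\<^sup>2" for i
    by (simp add: cmod_add_power2 norm_mult power_mult_distrib mult.commute mult.left_commute)
  have "cnj (lf_grad N A B C d j z) = cnj D * cnj (C j) - (\<Sum>i<N. cnj (\<alpha> i) * A i j)"
    by (simp add: lf_grad_def D_def \<alpha>_def cnj_sum)
  hence grad: "Re (t * cnj (lf_grad N A B C d j z))
      = Re (t * (cnj D * cnj (C j))) - (\<Sum>i<N. Re (t * (cnj (\<alpha> i) * A i j)))"
    by (simp add: right_diff_distrib sum_distrib_left Re_sum)
  have "lf_quad N A B C d z = (cmod D)\<^sup>2 - (\<Sum>i<N. (cmod (\<alpha> i))\<^sup>2)"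
    by (simp add: lf_quad_def D_def \<alpha>_def)
  thus ?thesis
    unfolding lf_quad_def[of N A B C d "z(j := z j + t)"] den num grad
    by (simp add: sum.distrib sum_subtractf sum_distrib_left algebra_simps)
qed

lemma lf_quad_pos:
  assumes "\<forall>z\<in>cball_N N. cinner N z C + d \<noteq> 0" "lf_map N A B C d ` cball_N N \<subseteq> cball_N N"
    and "z \<in> cball_N N"
  shows "0 < lf_quad N A B C d z"
  using assms by (auto simp: lf_quad_pos_iff cball_N_def)

lemma lf_quad_ray_quadratic:
  "\<exists>X Y Z. \<forall>s. lf_quad N A B C d (\<lambda>m. of_real s * e m) = s\<^sup>2 * X + 2 * s * Y + Z"
proof (intro exI allI)
  fix s :: real
  define a where "a i = (\<Sum>m<N. A i m * e m)" for i
  have "cinner N (\<lambda>m. of_real s * e m) C + d = d + of_real s * cinner N e C"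
    by (simp add: cinner_def sum_distrib_left mult.assoc)
  hence den: "(cmod (cinner N (\<lambda>m. of_real s * e m) C + d))\<^sup>2
      = (cmod d)\<^sup>2 + 2 * s * Re (cnj d * cinner N e C) + s\<^sup>2 * (cmod (cinner N e C))\<^sup>2"
    by (simp add: cmod_add_power2 norm_mult power_mult_distrib algebra_simps)
  have "(\<Sum>m<N. A i m * (of_real s * e m)) + B i = B i + of_real s * a i" for i
    by (simp add: a_def sum_distrib_left mult.left_commute)
  hence num: "(cmod ((\<Sum>m<N. A i m * (of_real s * e m)) + B i))\<^sup>2
      = (cmod (B i))\<^sup>2 + 2 * s * Re (cnj (B i) * a i) + s\<^sup>2 * (cmod (a i))\<^sup>2" for i
    by (simp add: cmod_add_power2 norm_mult power_mult_distrib algebra_simps)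
  show "lf_quad N A B C d (\<lambda>m. of_real s * e m)
      = s\<^sup>2 * ((cmod (cinner N e C))\<^sup>2 - (\<Sum>i<N. (cmod (a i))\<^sup>2))
        + 2 * s * (Re (cnj d * cinner N e C) - (\<Sum>i<N. Re (cnj (B i) * a i)))
        + ((cmod d)\<^sup>2 - (\<Sum>i<N. (cmod (B i))\<^sup>2))"
    unfolding lf_quad_def den num
    by (simp add: sum.distrib sum_subtractf sum_distrib_left algebra_simps)
qed

lemma lf_grad_affine:
  "lf_grad N A B C d j z = lf_grad N A B C d j (\<lambda>_. 0)
     + (\<Sum>m<N. z m * (cnj (C m) * C j - (\<Sum>i<N. A i m * cnj (A i j))))"
proof -
  have "(\<Sum>i<N. (\<Sum>m<N. A i m * z m) * cnj (A i j)) = (\<Sum>i<N. \<Sum>m<N. z m * (A i m * cnj (A i j)))"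
    by (intro sum.cong refl) (simp add: sum_distrib_left sum_distrib_right ac_simps)
  also have "\<dots> = (\<Sum>m<N. \<Sum>i<N. z m * (A i m * cnj (A i j)))"
    by (rule sum.swap)
  finally show ?thesis
    by (simp add: lf_grad_def cinner_def sum_distrib_left sum_distrib_right sum_subtractf
        sum.distrib algebra_simps)
qed

lemma lf_grad_at_preimage:
  assumes "lf_map N A B C d z = w" "cinner N z C + d \<noteq> 0"
  shows "lf_grad N A B C d j z = (cinner N z C + d) * (C j - (\<Sum>i<N. w i * cnj (A i j)))"
proof -
  have "(\<Sum>m<N. A i m * z m) + B i = (cinner N z C + d) * w i" if "i < N" for i
    using assms that by (auto simp: lf_map_def)
  hence "(\<Sum>i<N. ((\<Sum>m<N. A i m * z m) + B i) * cnj (A i j))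
      = (cinner N z C + d) * (\<Sum>i<N. w i * cnj (A i j))"
    by (simp add: sum_distrib_left mult.assoc)
  thus ?thesis
    by (simp add: lf_grad_def right_diff_distrib)
qed

lemma isCont_lf_map_ray:
  assumes "cinner N e C + d \<noteq> 0"
  shows "isCont (\<lambda>s::real. lf_map N A B C d (\<lambda>m. of_real s * e m)) 1"
proof -
  define S where "S = {s::real. cinner N (\<lambda>m. of_real s * e m) C + d \<noteq> 0}"
  have "open S"
    unfolding S_def cinner_def by (intro open_Collect_neq continuous_intros)
  moreover have "1 \<in> S"
    using assms by (simp add: S_def)
  moreover have "continuous_on S (\<lambda>s. lf_map N A B C d (\<lambda>m. of_real s * e m))"
  proof (rule continuous_on_coordinatewise_then_product)
    show "continuous_on S (\<lambda>s. lf_map N A B C d (\<lambda>m. of_real s * e m) i)" for i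
      by (cases "i < N") (auto simp: lf_map_def cinner_def S_def intro!: continuous_intros)
  qed
  ultimately show ?thesis
    using continuous_on_eq_continuous_at by blast
qed

lemma lf_map_invariant_numerator:
  assumes "lf_map N A B C d ` cball_N k \<subseteq> cball_N k" "z \<in> cball_N k" "cinner N z C + d \<noteq> 0"
    and "k \<le> i" "i < N"
  shows "(\<Sum>m<N. A i m * z m) + B i = 0"
proof -
  have "lf_map N A B C d z i = 0"
    using assms(1,2,4) by (auto simp: cball_N_def)
  with assms(3,5) show ?thesis
    by (simp add: lf_map_def)
qed

lemma lf_map_invariant_coeffs:
  assumes "lf_map N A B C d ` cball_N k \<subseteq> cball_N k" "\<forall>z\<in>cball_N k. cinner N z C + d \<noteq> 0"
    and "k \<le> i" "i < N"
  shows "B i = 0" and "m < k \<Longrightarrow> A i m = 0"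
proof -
  show B0: "B i = 0"
    using lf_map_invariant_numerator[OF assms(1) zero_in_cball_N _ assms(3,4)] assms(2) zero_in_cball_N
    by simp
  assume m: "m < k"
  define z where "z = (\<lambda>j. if j = m then 1/2 else 0 :: complex)"
  have z: "z \<in> cball_N k"
    using m by (simp add: z_def single_in_cball_N)
  have "(\<Sum>j<N. A i j * z j) = A i m / 2"
    using m assms(3,4) by (simp add: z_def sum_single_mult)
  thus "A i m = 0"
    using lf_map_invariant_numerator[OF assms(1) z _ assms(3,4)] assms(2) z B0 by simp
qed

lemma eventually_at_left_1_unit_interval: "eventually (\<lambda>s. 0 < s \<and> s < 1) (at_left (1::real))"
  by (rule eventually_mono[OF eventually_at_left_real[of 0]]) auto

lemma linear_term_vanishes_at_boundary:
  fixes L :: "real \<Rightarrow> real" and g :: "real \<Rightarrow> complex" and K :: real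
  assumes pos: "\<And>s t. 0 < s \<Longrightarrow> s < 1 \<Longrightarrow> s\<^sup>2 + (cmod t)\<^sup>2 < 1 \<Longrightarrow>
      0 < (1 - s) * L s + 2 * Re (t * cnj (g s)) + (cmod t)\<^sup>2 * K"
    and "isCont L 1" "isCont g 1"
  shows "g 1 = 0"
proof (rule ccontr)
  assume g1: "g 1 \<noteq> 0"
  \<comment> \<open>With \<open>t = -\<epsilon>(1-s)u\<close> the expression becomes \<open>(1-s) F s\<close>, and \<open>\<epsilon>\<close> is large enough that \<open>F 1 < 0\<close>.\<close>
  define u where "u = g 1 / of_real (cmod (g 1))"
  define \<epsilon> where "\<epsilon> = (\<bar>L 1\<bar> + 1) / cmod (g 1)"
  define F where "F s = L s - 2 * \<epsilon> * Re (u * cnj (g s)) + \<epsilon>\<^sup>2 * (1 - s) * K" for s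
  define H where "H s = 1 + s - \<epsilon>\<^sup>2 * (1 - s)" for s :: real
  have \<epsilon>: "0 < \<epsilon>" "\<epsilon> * cmod (g 1) = \<bar>L 1\<bar> + 1"
    using g1 by (simp_all add: \<epsilon>_def)
  have u: "cmod u = 1" "u * cnj (g 1) = of_real (cmod (g 1))"
    using g1 by (simp_all add: u_def norm_divide complex_norm_square[symmetric] power2_eq_square)
  have "F 1 < 0"
    using \<epsilon> u by (simp add: F_def)
  moreover have "isCont F 1"
    unfolding F_def using assms(2,3) by (intro continuous_intros continuous_Re) auto
  ultimately have "eventually (\<lambda>s. F s < 0) (at_left 1)"
    by (metis isCont_def order_tendstoD(2) tendsto_within_subset top_greatest)
  moreover have "eventually (\<lambda>s. 0 < H s) (at_left 1)"
  proof (rule order_tendstoD(1))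
    show "(H \<longlongrightarrow> H 1) (at_left 1)"
      unfolding H_def by (intro tendsto_intros)
  qed (simp add: H_def)
  ultimately have "eventually (\<lambda>s. F s < 0 \<and> 0 < H s \<and> 0 < s \<and> s < 1) (at_left (1::real))"
    using eventually_at_left_1_unit_interval by eventually_elim auto
  then obtain s where s: "F s < 0" "0 < H s" "0 < s" "s < 1"
    using eventually_happens'[of "at_left (1::real)"] by force
  define t where "t = - of_real (\<epsilon> * (1 - s)) * u"
  have ct: "cmod t = \<epsilon> * (1 - s)"
    unfolding t_def norm_mult norm_minus_cancel norm_of_real using \<epsilon> u s by simp
  have "s\<^sup>2 + (cmod t)\<^sup>2 = 1 - (1 - s) * H s"
    by (simp add: ct H_def power2_eq_square algebra_simps)
  with s have "s\<^sup>2 + (cmod t)\<^sup>2 < 1"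
    by simp
  with pos s have "0 < (1 - s) * L s + 2 * Re (t * cnj (g s)) + (cmod t)\<^sup>2 * K"
    by blast
  also have "\<dots> = (1 - s) * F s"
    unfolding ct by (simp add: t_def F_def power2_eq_square algebra_simps)
  also have "\<dots> < 0"
    using s by (simp add: mult_pos_neg)
  finally show False .
qed

lemma left_inverse_sphere_image_outside_ball:
  fixes F G :: "(nat \<Rightarrow> complex) \<Rightarrow> (nat \<Rightarrow> complex)"
  assumes F: "F ` cball_N k \<subseteq> cball_N k"
    and G: "G ` cball_N k \<subseteq> cball_N k" "\<forall>i<k. continuous_on (cball_N k) (\<lambda>z. G z i)"
      "\<forall>z\<in>cball_N k. G (F z) = z"
    and e: "e \<in> sphere_N k"
    and cont: "isCont (\<lambda>s::real. F (\<lambda>m. of_real s * e m)) 1"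
  shows "F e \<notin> cball_N k"
proof
  assume Fe: "F e \<in> cball_N k"
  have ray: "eventually (\<lambda>s. (\<lambda>m. of_real s * e m) \<in> cball_N k) (at_left (1::real))"
    using eventually_at_left_1_unit_interval
    by eventually_elim (use e in \<open>auto intro: scaled_sphere_in_cball_N\<close>)
  have "((\<lambda>s. F (\<lambda>m. of_real s * e m)) \<longlongrightarrow> F e) (at_left 1)"
    using tendsto_within_subset[OF cont[unfolded isCont_def]] by simp
  moreover have "eventually (\<lambda>s. F (\<lambda>m. of_real s * e m) \<in> cball_N k) (at_left (1::real))"
    using ray by eventually_elim (use F in blast)
  ultimately have "((\<lambda>s. G (F (\<lambda>m. of_real s * e m)) i) \<longlongrightarrow> G (F e) i) (at_left 1)" if "i < k" for i
    using continuous_on_tendsto_compose[OF G(2)[rule_format, OF that] _ Fe] by blast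
  moreover have "eventually (\<lambda>s. G (F (\<lambda>m. of_real s * e m)) i = of_real s * e i) (at_left (1::real))" for i
    using ray by eventually_elim (use G(3) in simp)
  ultimately have "((\<lambda>s. of_real s * e i) \<longlongrightarrow> G (F e) i) (at_left (1::real))" if "i < k" for i
    using that by (blast intro: Lim_transform_eventually)
  moreover have "((\<lambda>s. of_real s * e i) \<longlongrightarrow> e i) (at_left (1::real))" for i
    using tendsto_of_real[OF tendsto_ident_at, of 1 "{..<1}"] by (auto intro: tendsto_eq_intros)
  ultimately have "G (F e) i = e i" if "i < k" for i
    using that tendsto_unique[OF trivial_limit_at_left_real] by blast
  moreover have "G (F e) \<in> cball_N k"
    using G(1) Fe by blast
  ultimately show False
    using e by (simp add: cball_N_def sphere_N_def)
qed

lemma lf_map_coordinate_local: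
  assumes "\<forall>j. k \<le> j \<longrightarrow> j < N \<longrightarrow> A i j = 0 \<and> C j = 0" "\<forall>j<k. z j = w j"
  shows "lf_map N A B C d z i = lf_map N A B C d w i"
proof -
  have "A i j * z j = A i j * w j" "z j * cnj (C j) = w j * cnj (C j)" if "j < N" for j
    using assms that by (cases "j < k"; simp)+
  hence "(\<Sum>j<N. A i j * z j) = (\<Sum>j<N. A i j * w j)" "cinner N z C = cinner N w C"
    unfolding cinner_def by (auto intro: sum.cong)
  thus ?thesis
    by (simp add: lf_map_def)
qed

context
  fixes N k :: nat and A :: "nat \<Rightarrow> nat \<Rightarrow> complex" and B C :: "nat \<Rightarrow> complex" and d :: complex
    and G :: "(nat \<Rightarrow> complex) \<Rightarrow> (nat \<Rightarrow> complex)"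
  assumes kN: "k \<le> N"
    and denom: "\<forall>z\<in>cball_N N. cinner N z C + d \<noteq> 0"
    and self: "lf_map N A B C d ` cball_N N \<subseteq> cball_N N"
    and Bk: "lf_map N A B C d ` cball_N k \<subseteq> cball_N k"
    and G_maps: "G ` cball_N k \<subseteq> cball_N k"
    and G_cont: "\<forall>i<k. continuous_on (cball_N k) (\<lambda>z. G z i)"
    and G_left_inverse: "\<forall>z\<in>cball_N k. G (lf_map N A B C d z) = z"
begin

lemma denom_nonzero_subball: "\<forall>z\<in>cball_N k. cinner N z C + d \<noteq> 0"
  using denom cball_N_mono[OF kN] by blast

lemma lf_map_outside_coordinate:
  assumes "\<forall>m\<ge>k. z m = 0" "k \<le> i"
  shows "lf_map N A B C d z i = 0"
proof (cases "i < N")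
  case True
  have "A i m * z m = 0" for m
    using assms lf_map_invariant_coeffs(2)[OF Bk denom_nonzero_subball assms(2) True] by (cases "m < k") auto
  hence "(\<Sum>m<N. A i m * z m) = 0"
    by (intro sum.neutral) auto
  thus ?thesis
    using lf_map_invariant_coeffs(1)[OF Bk denom_nonzero_subball assms(2) True] by (simp add: lf_map_def)
qed (simp add: lf_map_def)

lemma lf_quad_sphere_zero:
  assumes e: "e \<in> sphere_N k"
  shows "lf_quad N A B C d e = 0"
proof -
  obtain X Y Z where q: "\<And>s. lf_quad N A B C d (\<lambda>m. of_real s * e m) = s\<^sup>2 * X + 2 * s * Y + Z"
    using lf_quad_ray_quadratic by blast
  have pos: "0 < s\<^sup>2 * X + 2 * s * Y + Z" if "0 < s \<and> s < 1" for s
    using that e cball_N_mono[OF kN] by (metis q lf_quad_pos[OF denom self] abs_of_pos subsetD scaled_sphere_in_cball_N)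
  have "((\<lambda>s. s\<^sup>2 * X + 2 * s * Y + Z) \<longlongrightarrow> 1\<^sup>2 * X + 2 * 1 * Y + Z) (at_left (1::real))"
    by (intro tendsto_intros)
  moreover have "eventually (\<lambda>s. 0 \<le> s\<^sup>2 * X + 2 * s * Y + Z) (at_left (1::real))"
    using eventually_at_left_1_unit_interval by eventually_elim (use pos in force)
  ultimately have "0 \<le> 1\<^sup>2 * X + 2 * 1 * Y + Z"
    by (rule tendsto_lowerbound) simp
  hence "0 \<le> lf_quad N A B C d e"
    using q[of 1] by simp
  moreover have "\<not> 0 < lf_quad N A B C d e"
  proof
    assume "0 < lf_quad N A B C d e"
    hence den: "cinner N e C + d \<noteq> 0" and "(\<Sum>i<N. (cmod (lf_map N A B C d e i))\<^sup>2) < 1"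
      by (auto simp: lf_quad_pos_iff)
    moreover have "\<forall>i\<ge>k. lf_map N A B C d e i = 0"
      using e by (auto simp: sphere_N_def intro: lf_map_outside_coordinate)
    ultimately have "lf_map N A B C d e \<in> cball_N k"
      by (simp add: in_cball_N_iff[OF _ kN])
    moreover have "lf_map N A B C d e \<notin> cball_N k"
      by (rule left_inverse_sphere_image_outside_ball[OF Bk G_maps G_cont G_left_inverse e isCont_lf_map_ray[OF den]])
    ultimately show False
      by blast
  qed
  ultimately show ?thesis
    by simp
qed

lemma lf_grad_sphere_zero:
  assumes e: "e \<in> sphere_N k" and j: "k \<le> j" "j < N"
  shows "lf_grad N A B C d j e = 0"
proof -
  obtain X Y Z where q: "\<And>s. lf_quad N A B C d (\<lambda>m. of_real s * e m) = s\<^sup>2 * X + 2 * s * Y + Z"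
    using lf_quad_ray_quadratic by blast
  have "X + 2 * Y + Z = 0"
    using q[of 1] lf_quad_sphere_zero[OF e] by simp
  hence qL: "lf_quad N A B C d (\<lambda>m. of_real s * e m) = (1 - s) * (- X * (s + 1) - 2 * Y)" for s
    unfolding q by (simp add: power2_eq_square algebra_simps)
  have "lf_grad N A B C d j (\<lambda>m. of_real 1 * e m) = 0"
  proof (rule linear_term_vanishes_at_boundary)
    fix s :: real and t
    assume s: "0 < s" "s < 1" "s\<^sup>2 + (cmod t)\<^sup>2 < 1"
    let ?z = "\<lambda>m. of_real s * e m"
    have ej: "e j = 0"
      using e j by (simp add: sphere_N_def)
    have "?z(j := t) \<in> cball_N N"
      using s e j by (intro update_in_cball_N[of _ k]) (auto simp: scaled_sphere_in_cball_N sum_cmod_scaled_sphere)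
    hence "0 < lf_quad N A B C d (?z(j := ?z j + t))"
      using ej lf_quad_pos[OF denom self] by simp
    with lf_quad_update[OF j(2), of A B C d ?z t] show "0 < (1 - s) * (- X * (s + 1) - 2 * Y) + 2 * Re (t * cnj (lf_grad N A B C d j ?z))
        + (cmod t)\<^sup>2 * ((cmod (C j))\<^sup>2 - (\<Sum>i<N. (cmod (A i j))\<^sup>2))"
      by (simp add: qL)
  qed (auto simp: lf_grad_def cinner_def intro!: continuous_intros)
  thus ?thesis
    by simp
qed

lemma lf_grad_subball_zero:
  assumes "1 \<le> k" "k \<le> j" "j < N" "z \<in> cball_N k"
  shows "lf_grad N A B C d j z = 0"
proof -
  define h where "h m = cnj (C m) * C j - (\<Sum>i<N. A i m * cnj (A i j))" for m
  define g0 where "g0 = lf_grad N A B C d j (\<lambda>_. 0)"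
  have affine: "lf_grad N A B C d j w = g0 + (\<Sum>m<N. w m * h m)" for w
    unfolding g0_def h_def by (rule lf_grad_affine)
  have basis: "g0 + \<sigma> * h m = 0" if "m < k" "cmod \<sigma> = 1" for m \<sigma>
  proof -
    have "(\<Sum>i<N. (if i = m then \<sigma> else 0) * h i) = \<sigma> * h m"
      using that kN by (simp add: sum_single_mult)
    thus ?thesis
      using lf_grad_sphere_zero[OF single_in_sphere_N[OF that] assms(2,3)] affine by simp
  qed
  have "g0 + 1 * h 0 = 0" "g0 + (-1) * h 0 = 0"
    using basis[of 0 1] basis[of 0 "-1"] assms(1) by simp_all
  hence g0: "g0 = 0"
    by simp
  have "z m * h m = 0" for m
    using basis[of m 1] g0 assms(4) by (cases "m < k") (auto simp: cball_N_def)
  hence "(\<Sum>m<N. z m * h m) = 0"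
    by (intro sum.neutral) blast
  thus ?thesis
    by (simp add: affine g0)
qed

lemma lf_map_coeffs_outside_subball:
  assumes "1 \<le> k" "k \<le> j" "j < N" and G_right_inverse: "\<forall>w\<in>cball_N k. lf_map N A B C d (G w) = w"
  shows "C j = 0" and "i < k \<Longrightarrow> A i j = 0"
proof -
  \<comment> \<open>Every point of \<open>B_k\<close> has a preimage in \<open>B_k\<close>, where \<open>lf_grad\<close> vanishes.\<close>
  have key: "C j = (\<Sum>i<N. w i * cnj (A i j))" if "w \<in> cball_N k" for w
  proof -
    have "G w \<in> cball_N k"
      using G_maps that by blast
    hence "lf_grad N A B C d j (G w) = 0" "cinner N (G w) C + d \<noteq> 0"
      using lf_grad_subball_zero[OF assms(1-3)] denom_nonzero_subball by auto
    thus ?thesis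
      using lf_grad_at_preimage[OF G_right_inverse[rule_format, OF that]] by simp
  qed
  show C0: "C j = 0"
    using key[OF zero_in_cball_N] by simp
  assume "i < k"
  hence "C j = cnj (A i j) / 2"
    using key[OF single_in_cball_N[of i k "1/2"]] kN by (simp add: sum_single_mult)
  with C0 show "A i j = 0"
    by simp
qed

end

theorem lemma4p2:
  fixes N k :: nat and A :: "nat \<Rightarrow> nat \<Rightarrow> complex" and B C :: "nat \<Rightarrow> complex" and d :: complex
  assumes "1 \<le> k" and "k \<le> N"
    and denom: "\<forall>z\<in>cball_N N. cinner N z C + d \<noteq> 0"
    and self: "lf_map N A B C d ` cball_N N \<subseteq> cball_N N"
    and Bk: "lf_map N A B C d ` cball_N k \<subseteq> cball_N k"
    and aut: "is_aut_ball k (lf_map N A B C d)"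
  shows "\<forall>i<k. \<forall>z\<in>cball_N N. \<forall>w\<in>cball_N N. (\<forall>j<k. z j = w j) \<longrightarrow>
            lf_map N A B C d z i = lf_map N A B C d w i \<and>
            lf_map N (adj_mat A) (\<lambda>j. - C j) (\<lambda>j. - B j) (cnj d) z i =
            lf_map N (adj_mat A) (\<lambda>j. - C j) (\<lambda>j. - B j) (cnj d) w i"
proof (intro allI impI ballI conjI)
  fix i and z w :: "nat \<Rightarrow> complex"
  assume i: "i < k" and agree: "\<forall>j<k. z j = w j"
  obtain G where G: "G ` cball_N k \<subseteq> cball_N k" "\<forall>i<k. continuous_on (cball_N k) (\<lambda>z. G z i)"
    and inverse: "\<forall>z\<in>cball_N k. G (lf_map N A B C d z) = z \<and> lf_map N A B C d (G z) = z"
    using aut unfolding is_aut_ball_def holo_k_def by blast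
  have "A i j = 0 \<and> C j = 0" if "k \<le> j" "j < N" for j
    using lf_map_coeffs_outside_subball[OF \<open>k \<le> N\<close> denom self Bk G _ \<open>1 \<le> k\<close> that] inverse i by blast
  thus "lf_map N A B C d z i = lf_map N A B C d w i"
    using agree by (intro lf_map_coordinate_local) auto
  have "\<forall>z\<in>cball_N k. cinner N z C + d \<noteq> 0"
    using denom cball_N_mono[OF \<open>k \<le> N\<close>] by blast
  hence "adj_mat A i j = 0 \<and> - B j = 0" if "k \<le> j" "j < N" for j
    using lf_map_invariant_coeffs[OF Bk _ that] i by (simp add: adj_mat_def)
  thus "lf_map N (adj_mat A) (\<lambda>j. - C j) (\<lambda>j. - B j) (cnj d) z i =
      lf_map N (adj_mat A) (\<lambda>j. - C j) (\<lambda>j. - B j) (cnj d) w i"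
    using agree by (intro lf_map_coordinate_local) auto
qed

end
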